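(* Let $(T,\eta,\mu,T_0,m_0)$ be an ideal monad on a category $\mathcal{C}$ with finite coproducts. Then the Eilenberg–Moore category $\mathbf{EM}(T)$ is isomorphic to the full subcategory of the category $\mathbf{Alg}(T_0)$ of functor $T_0$-algebras consisting of those $a:T_0X\to X$ satisfying $a\circ m_{0,X}=a\circ T_0[\mathrm{id}_X,a]$ (as maps $T_0TX=T_0(X+T_0X)\to X$).
   Context: An ideal monad $(T,\eta,\mu,T_0,m_0)$ on a category with finite coproducts consists of a monad $(T,\eta,\mu)$ with $T=\mathrm{Id}+T_0$ for an endofunctor $T_0$, unit $\eta=\mathrm{inl}:\mathrm{Id}\to\mathrm{Id}+T_0$, and a natural transformation $m_0:T_0T\to T_0$ such that $\mu\circ\mathrm{inr}_T=\mathrm{inr}\circ m_0$, equivalently $\mu=[\mathrm{id}_{\mathrm{Id}+T_0},\ \mathrm{inr}\circ m_0]$. A functor $T_0$-algebra is a morphism $a:T_0X\to X$; a morphism of such algebras $a\to b$ is $f:X\to Y$ with $f\circ a=b\circ T_0f$. *)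

theory Defs
  imports Main
begin

record ('o,'a) cat =
  Obj :: "'o set"
  Arr :: "'a set"
  Dom :: "'a \<Rightarrow> 'o"
  Cod :: "'a \<Rightarrow> 'o"
  Ide :: "'o \<Rightarrow> 'a"
  Comp :: "'a \<Rightarrow> 'a \<Rightarrow> 'a"   (* Comp C g f = g \<circ> f *)

definition hom :: "('o,'a) cat \<Rightarrow> 'o \<Rightarrow> 'o \<Rightarrow> 'a set" where
  "hom C X Y = {f \<in> Arr C. Dom C f = X \<and> Cod C f = Y}"

definition category :: "('o,'a) cat \<Rightarrow> bool" where
  "category C \<longleftrightarrow>
     (\<forall>f\<in>Arr C. Dom C f \<in> Obj C \<and> Cod C f \<in> Obj C) \<and>
     (\<forall>X\<in>Obj C. Ide C X \<in> hom C X X) \<and>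
     (\<forall>f\<in>Arr C. \<forall>g\<in>Arr C. Cod C f = Dom C g \<longrightarrow> Comp C g f \<in> hom C (Dom C f) (Cod C g)) \<and>
     (\<forall>f\<in>Arr C. Comp C f (Ide C (Dom C f)) = f \<and> Comp C (Ide C (Cod C f)) f = f) \<and>
     (\<forall>f\<in>Arr C. \<forall>g\<in>Arr C. \<forall>h\<in>Arr C. Cod C f = Dom C g \<longrightarrow> Cod C g = Dom C h \<longrightarrow>
        Comp C h (Comp C g f) = Comp C (Comp C h g) f)"

definition "functor" :: "('o,'a) cat \<Rightarrow> ('p,'b) cat \<Rightarrow> ('o \<Rightarrow> 'p) \<Rightarrow> ('a \<Rightarrow> 'b) \<Rightarrow> bool" where
  "functor C D Fo Fa \<longleftrightarrow>
     (\<forall>X\<in>Obj C. Fo X \<in> Obj D) \<and>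
     (\<forall>f\<in>Arr C. Fa f \<in> hom D (Fo (Dom C f)) (Fo (Cod C f))) \<and>
     (\<forall>X\<in>Obj C. Fa (Ide C X) = Ide D (Fo X)) \<and>
     (\<forall>f\<in>Arr C. \<forall>g\<in>Arr C. Cod C f = Dom C g \<longrightarrow> Fa (Comp C g f) = Comp D (Fa g) (Fa f))"

definition nat_trans :: "('o,'a) cat \<Rightarrow> ('p,'b) cat \<Rightarrow> ('o \<Rightarrow> 'p) \<Rightarrow> ('a \<Rightarrow> 'b)
    \<Rightarrow> ('o \<Rightarrow> 'p) \<Rightarrow> ('a \<Rightarrow> 'b) \<Rightarrow> ('o \<Rightarrow> 'b) \<Rightarrow> bool" where
  "nat_trans C D Fo Fa Go Ga \<tau> \<longleftrightarrow>
     (\<forall>X\<in>Obj C. \<tau> X \<in> hom D (Fo X) (Go X)) \<and>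
     (\<forall>f\<in>Arr C. Comp D (\<tau> (Cod C f)) (Fa f) = Comp D (Ga f) (\<tau> (Dom C f)))"

definition iso_cat :: "('o,'a) cat \<Rightarrow> ('p,'b) cat \<Rightarrow> bool" where
  "iso_cat C D \<longleftrightarrow> (\<exists>Fo Fa Go Ga. functor C D Fo Fa \<and> functor D C Go Ga \<and>
     (\<forall>X\<in>Obj C. Go (Fo X) = X) \<and> (\<forall>f\<in>Arr C. Ga (Fa f) = f) \<and>
     (\<forall>Y\<in>Obj D. Fo (Go Y) = Y) \<and> (\<forall>g\<in>Arr D. Fa (Ga g) = g))"

definition binary_coproduct :: "('o,'a) cat \<Rightarrow> 'o \<Rightarrow> 'o \<Rightarrow> 'o \<Rightarrow> 'a \<Rightarrow> 'a \<Rightarrow> bool" where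
  "binary_coproduct C X Y P i j \<longleftrightarrow> P \<in> Obj C \<and> i \<in> hom C X P \<and> j \<in> hom C Y P \<and>
     (\<forall>Z\<in>Obj C. \<forall>f\<in>hom C X Z. \<forall>g\<in>hom C Y Z.
        \<exists>!h. h \<in> hom C P Z \<and> Comp C h i = f \<and> Comp C h j = g)"

definition initial_object :: "('o,'a) cat \<Rightarrow> 'o \<Rightarrow> bool" where
  "initial_object C I \<longleftrightarrow> I \<in> Obj C \<and> (\<forall>Z\<in>Obj C. \<exists>!h. h \<in> hom C I Z)"

definition has_finite_coproducts ::
  "('o,'a) cat \<Rightarrow> ('o \<Rightarrow> 'o \<Rightarrow> 'o) \<Rightarrow> ('o \<Rightarrow> 'o \<Rightarrow> 'a) \<Rightarrow> ('o \<Rightarrow> 'o \<Rightarrow> 'a) \<Rightarrow> bool" where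
  "has_finite_coproducts C cp inl inr \<longleftrightarrow> (\<exists>I. initial_object C I) \<and>
     (\<forall>X\<in>Obj C. \<forall>Y\<in>Obj C. binary_coproduct C X Y (cp X Y) (inl X Y) (inr X Y))"

definition copair ::
  "('o,'a) cat \<Rightarrow> ('o \<Rightarrow> 'o \<Rightarrow> 'o) \<Rightarrow> ('o \<Rightarrow> 'o \<Rightarrow> 'a) \<Rightarrow> ('o \<Rightarrow> 'o \<Rightarrow> 'a) \<Rightarrow> 'a \<Rightarrow> 'a \<Rightarrow> 'a" where
  "copair C cp inl inr f g = (THE h. h \<in> hom C (cp (Dom C f) (Dom C g)) (Cod C f) \<and>
       Comp C h (inl (Dom C f) (Dom C g)) = f \<and> Comp C h (inr (Dom C f) (Dom C g)) = g)"

definition monad :: "('o,'a) cat \<Rightarrow> ('o \<Rightarrow> 'o) \<Rightarrow> ('a \<Rightarrow> 'a) \<Rightarrow> ('o \<Rightarrow> 'a) \<Rightarrow> ('o \<Rightarrow> 'a) \<Rightarrow> bool" where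
  "monad C To Ta \<eta> \<mu> \<longleftrightarrow> functor C C To Ta \<and>
     nat_trans C C (\<lambda>X. X) (\<lambda>f. f) To Ta \<eta> \<and>
     nat_trans C C (\<lambda>X. To (To X)) (\<lambda>f. Ta (Ta f)) To Ta \<mu> \<and>
     (\<forall>X\<in>Obj C. Comp C (\<mu> X) (\<eta> (To X)) = Ide C (To X) \<and>
                Comp C (\<mu> X) (Ta (\<eta> X)) = Ide C (To X) \<and>
                Comp C (\<mu> X) (\<mu> (To X)) = Comp C (\<mu> X) (Ta (\<mu> X)))"

definition ideal_monad ::
  "('o,'a) cat \<Rightarrow> ('o \<Rightarrow> 'o \<Rightarrow> 'o) \<Rightarrow> ('o \<Rightarrow> 'o \<Rightarrow> 'a) \<Rightarrow> ('o \<Rightarrow> 'o \<Rightarrow> 'a) \<Rightarrow>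
   ('o \<Rightarrow> 'o) \<Rightarrow> ('a \<Rightarrow> 'a) \<Rightarrow> ('o \<Rightarrow> 'a) \<Rightarrow> ('o \<Rightarrow> 'a) \<Rightarrow>
   ('o \<Rightarrow> 'o) \<Rightarrow> ('a \<Rightarrow> 'a) \<Rightarrow> ('o \<Rightarrow> 'a) \<Rightarrow> bool" where
  "ideal_monad C cp inl inr To Ta \<eta> \<mu> T0o T0a m0 \<longleftrightarrow>
     monad C To Ta \<eta> \<mu> \<and> functor C C T0o T0a \<and>
     (\<forall>X\<in>Obj C. To X = cp X (T0o X)) \<and>
     (\<forall>f\<in>Arr C. Ta f = copair C cp inl inr
                         (Comp C (inl (Cod C f) (T0o (Cod C f))) f)
                         (Comp C (inr (Cod C f) (T0o (Cod C f))) (T0a f))) \<and>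
     (\<forall>X\<in>Obj C. \<eta> X = inl X (T0o X)) \<and>
     nat_trans C C (\<lambda>X. T0o (To X)) (\<lambda>f. T0a (Ta f)) T0o T0a m0 \<and>
     (\<forall>X\<in>Obj C. Comp C (\<mu> X) (inr (To X) (T0o (To X))) = Comp C (inr X (T0o X)) (m0 X))"

definition em_cat :: "('o,'a) cat \<Rightarrow> ('o \<Rightarrow> 'o) \<Rightarrow> ('a \<Rightarrow> 'a) \<Rightarrow> ('o \<Rightarrow> 'a) \<Rightarrow> ('o \<Rightarrow> 'a)
    \<Rightarrow> ('o \<times> 'a, ('o \<times> 'a) \<times> ('o \<times> 'a) \<times> 'a) cat" where
  "em_cat C To Ta \<eta> \<mu> = (let Ob = {(X, a). X \<in> Obj C \<and> a \<in> hom C (To X) X \<and>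
          Comp C a (\<eta> X) = Ide C X \<and> Comp C a (\<mu> X) = Comp C a (Ta a)} in
     \<lparr> Obj = Ob,
       Arr = {(A, B, f). A \<in> Ob \<and> B \<in> Ob \<and> f \<in> hom C (fst A) (fst B) \<and>
                Comp C f (snd A) = Comp C (snd B) (Ta f)},
       Dom = (\<lambda>(A, B, f). A),
       Cod = (\<lambda>(A, B, f). B),
       Ide = (\<lambda>A. (A, A, Ide C (fst A))),
       Comp = (\<lambda>(B', C', g) (A, B, f). (A, C', Comp C g f)) \<rparr>)"

definition alg_sub :: "('o,'a) cat \<Rightarrow> ('o \<Rightarrow> 'o \<Rightarrow> 'o) \<Rightarrow> ('o \<Rightarrow> 'o \<Rightarrow> 'a) \<Rightarrow> ('o \<Rightarrow> 'o \<Rightarrow> 'a)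
    \<Rightarrow> ('o \<Rightarrow> 'o) \<Rightarrow> ('a \<Rightarrow> 'a) \<Rightarrow> ('o \<Rightarrow> 'a)
    \<Rightarrow> ('o \<times> 'a, ('o \<times> 'a) \<times> ('o \<times> 'a) \<times> 'a) cat" where
  "alg_sub C cp inl inr T0o T0a m0 = (let Ob = {(X, a). X \<in> Obj C \<and> a \<in> hom C (T0o X) X \<and>
          Comp C a (m0 X) = Comp C a (T0a (copair C cp inl inr (Ide C X) a))} in
     \<lparr> Obj = Ob,
       Arr = {(A, B, f). A \<in> Ob \<and> B \<in> Ob \<and> f \<in> hom C (fst A) (fst B) \<and>
                Comp C f (snd A) = Comp C (snd B) (T0a f)},
       Dom = (\<lambda>(A, B, f). A),
       Cod = (\<lambda>(A, B, f). B),
       Ide = (\<lambda>A. (A, A, Ide C (fst A))),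
       Comp = (\<lambda>(B', C', g) (A, B, f). (A, C', Comp C g f)) \<rparr>)"

end

theory Submission
  imports Defs
begin

text \<open>Since \<eta> = inl, the unit law a \<circ> inl = id forces an Eilenberg--Moore structure
  a : X + T0 X \<rightarrow> X to be the copairing [id, b] of its restriction b = a \<circ> inr, and every
  [id, b] is unital. Testing the associativity law a \<circ> \<mu> = a \<circ> T a on the two summands of
  T T X = T X + T0 T X, the inl-component holds for every unital a, while by
  \<mu> \<circ> inr = inr \<circ> m0 and T f \<circ> inr = inr \<circ> T0 f the inr-component is exactly
  b \<circ> m0 = b \<circ> T0 [id, b]. The same test on X + T0 X shows that a map commutes with the
  T-structures iff it commutes with their restrictions. As both categories consist of all
  structure-preserving maps between structured objects of C, this bijection on structures
  is an isomorphism of categories.\<close>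

definition structured_cat :: "('o,'a) cat \<Rightarrow> ('o \<times> 's) set \<Rightarrow> ('s \<Rightarrow> 's \<Rightarrow> 'a \<Rightarrow> bool)
    \<Rightarrow> ('o \<times> 's, ('o \<times> 's) \<times> ('o \<times> 's) \<times> 'a) cat" where
  "structured_cat C Ob P =
     \<lparr> Obj = Ob,
       Arr = {(A, B, f). A \<in> Ob \<and> B \<in> Ob \<and> f \<in> hom C (fst A) (fst B) \<and> P (snd A) (snd B) f},
       Dom = (\<lambda>(A, B, f). A),
       Cod = (\<lambda>(A, B, f). B),
       Ide = (\<lambda>A. (A, A, Ide C (fst A))),
       Comp = (\<lambda>(B', C', g) (A, B, f). (A, C', Comp C g f)) \<rparr>"

lemma em_cat_eq_structured_cat:
  "em_cat C To Ta \<eta> \<mu> = structured_cat C (Obj (em_cat C To Ta \<eta> \<mu>))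
     (\<lambda>a b f. Comp C f a = Comp C b (Ta f))"
  by (simp add: em_cat_def structured_cat_def Let_def)

lemma alg_sub_eq_structured_cat:
  "alg_sub C cp inl inr T0o T0a m0 = structured_cat C (Obj (alg_sub C cp inl inr T0o T0a m0))
     (\<lambda>a b f. Comp C f a = Comp C b (T0a f))"
  by (simp add: alg_sub_def structured_cat_def Let_def)

lemma mem_Obj_em_cat_iff:
  "(X, a) \<in> Obj (em_cat C To Ta \<eta> \<mu>) \<longleftrightarrow> X \<in> Obj C \<and> a \<in> hom C (To X) X \<and>
     Comp C a (\<eta> X) = Ide C X \<and> Comp C a (\<mu> X) = Comp C a (Ta a)"
  by (simp add: em_cat_def Let_def)

lemma mem_Obj_alg_sub_iff:
  "(X, b) \<in> Obj (alg_sub C cp inl inr T0o T0a m0) \<longleftrightarrow> X \<in> Obj C \<and> b \<in> hom C (T0o X) X \<and>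
     Comp C b (m0 X) = Comp C b (T0a (copair C cp inl inr (Ide C X) b))"
  by (simp add: alg_sub_def Let_def)

lemma iso_cat_structured_cat:
  fixes \<phi> :: "'o \<Rightarrow> 's \<Rightarrow> 't" and \<psi> :: "'o \<Rightarrow> 't \<Rightarrow> 's"
  assumes \<phi>: "\<And>X a. (X, a) \<in> ObP \<Longrightarrow> (X, \<phi> X a) \<in> ObQ \<and> \<psi> X (\<phi> X a) = a"
    and \<psi>: "\<And>X b. (X, b) \<in> ObQ \<Longrightarrow> (X, \<psi> X b) \<in> ObP \<and> \<phi> X (\<psi> X b) = b"
    and PQ_iff: "\<And>X a Y b f. (X, a) \<in> ObP \<Longrightarrow> (Y, b) \<in> ObP \<Longrightarrow> f \<in> hom C X Y \<Longrightarrow>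
               P a b f \<longleftrightarrow> Q (\<phi> X a) (\<phi> Y b) f"
  shows "iso_cat (structured_cat C ObP P) (structured_cat C ObQ Q)"
proof -
  let ?F = "\<lambda>(X, a). (X, \<phi> X a)" and ?G = "\<lambda>(X, b). (X, \<psi> X b)"
  let ?Fa = "\<lambda>(A, B, f). (?F A, ?F B, f)" and ?Ga = "\<lambda>(A, B, f). (?G A, ?G B, f)"
  have QP_iff: "Q b b' f \<longleftrightarrow> P (\<psi> X b) (\<psi> Y b') f"
    if "(X, b) \<in> ObQ" "(Y, b') \<in> ObQ" "f \<in> hom C X Y" for X b Y b' f
    using PQ_iff[of X "\<psi> X b" Y "\<psi> Y b'" f] \<psi> that by simp
  have "functor (structured_cat C ObP P) (structured_cat C ObQ Q) ?F ?Fa"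
    using \<phi> PQ_iff by (auto simp: functor_def structured_cat_def hom_def)
  moreover have "functor (structured_cat C ObQ Q) (structured_cat C ObP P) ?G ?Ga"
    using \<psi> QP_iff by (auto simp: functor_def structured_cat_def hom_def)
  moreover have "\<forall>A \<in> Obj (structured_cat C ObP P). ?G (?F A) = A"
    and "\<forall>h \<in> Arr (structured_cat C ObP P). ?Ga (?Fa h) = h"
    and "\<forall>B \<in> Obj (structured_cat C ObQ Q). ?F (?G B) = B"
    and "\<forall>h \<in> Arr (structured_cat C ObQ Q). ?Fa (?Ga h) = h"
    using \<phi> \<psi> by (auto simp: structured_cat_def)
  ultimately show ?thesis
    unfolding iso_cat_def by blast
qed

locale category_with_coproducts =
  fixes C :: "('o, 'a) cat" and cp :: "'o \<Rightarrow> 'o \<Rightarrow> 'o" and inl inr :: "'o \<Rightarrow> 'o \<Rightarrow> 'a"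
  assumes category: "category C"
    and coproducts: "has_finite_coproducts C cp inl inr"
begin

abbreviation comp_C :: "'a \<Rightarrow> 'a \<Rightarrow> 'a" (infixr \<open>\<cdot>\<close> 55)
  where "g \<cdot> f \<equiv> Comp C g f"

abbreviation cotuple :: "'a \<Rightarrow> 'a \<Rightarrow> 'a"
  where "cotuple f g \<equiv> copair C cp inl inr f g"

lemma hom_Obj: "f \<in> hom C X Y \<Longrightarrow> X \<in> Obj C \<and> Y \<in> Obj C"
  using category unfolding category_def hom_def by auto

lemma comp_in_hom: "f \<in> hom C X Y \<Longrightarrow> g \<in> hom C Y Z \<Longrightarrow> g \<cdot> f \<in> hom C X Z"
  using category unfolding category_def hom_def by (metis (mono_tags, lifting) mem_Collect_eq)

lemma ide_in_hom: "X \<in> Obj C \<Longrightarrow> Ide C X \<in> hom C X X"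
  using category unfolding category_def by auto

lemma comp_ide_left: "f \<in> hom C X Y \<Longrightarrow> Ide C Y \<cdot> f = f"
  using category unfolding category_def hom_def by auto

lemma comp_ide_right: "f \<in> hom C X Y \<Longrightarrow> f \<cdot> Ide C X = f"
  using category unfolding category_def hom_def by auto

lemma comp_assoc:
  "f \<in> hom C X Y \<Longrightarrow> g \<in> hom C Y Z \<Longrightarrow> h \<in> hom C Z W \<Longrightarrow> h \<cdot> (g \<cdot> f) = (h \<cdot> g) \<cdot> f"
  using category unfolding category_def hom_def by auto

lemma binary_coproduct_cp:
  "X \<in> Obj C \<Longrightarrow> Y \<in> Obj C \<Longrightarrow> binary_coproduct C X Y (cp X Y) (inl X Y) (inr X Y)"
  using coproducts unfolding has_finite_coproducts_def by auto

lemma inl_in_hom: "X \<in> Obj C \<Longrightarrow> Y \<in> Obj C \<Longrightarrow> inl X Y \<in> hom C X (cp X Y)"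
  using binary_coproduct_cp unfolding binary_coproduct_def by auto

lemma inr_in_hom: "X \<in> Obj C \<Longrightarrow> Y \<in> Obj C \<Longrightarrow> inr X Y \<in> hom C Y (cp X Y)"
  using binary_coproduct_cp unfolding binary_coproduct_def by auto

lemma ex1_coproduct_arr:
  assumes "f \<in> hom C X Z" "g \<in> hom C Y Z"
  shows "\<exists>!h. h \<in> hom C (cp X Y) Z \<and> h \<cdot> inl X Y = f \<and> h \<cdot> inr X Y = g"
proof -
  have "X \<in> Obj C" "Y \<in> Obj C" "Z \<in> Obj C"
    using assms hom_Obj by blast+
  then show ?thesis
    using assms binary_coproduct_cp unfolding binary_coproduct_def by blast
qed

lemma
  assumes "f \<in> hom C X Z" "g \<in> hom C Y Z"
  shows cotuple_in_hom: "cotuple f g \<in> hom C (cp X Y) Z"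
    and cotuple_inl: "cotuple f g \<cdot> inl X Y = f"
    and cotuple_inr: "cotuple f g \<cdot> inr X Y = g"
proof -
  have "Dom C f = X" "Dom C g = Y" "Cod C f = Z"
    using assms unfolding hom_def by auto
  then have "cotuple f g = (THE h. h \<in> hom C (cp X Y) Z \<and> h \<cdot> inl X Y = f \<and> h \<cdot> inr X Y = g)"
    unfolding copair_def by simp
  with theI'[OF ex1_coproduct_arr[OF assms]]
  show "cotuple f g \<in> hom C (cp X Y) Z" "cotuple f g \<cdot> inl X Y = f" "cotuple f g \<cdot> inr X Y = g"
    by simp_all
qed

lemma coproduct_arr_eqI:
  assumes "X \<in> Obj C" "Y \<in> Obj C" "h \<in> hom C (cp X Y) Z" "k \<in> hom C (cp X Y) Z"
    and "h \<cdot> inl X Y = k \<cdot> inl X Y" "h \<cdot> inr X Y = k \<cdot> inr X Y"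
  shows "h = k"
proof -
  have "h \<cdot> inl X Y \<in> hom C X Z" "h \<cdot> inr X Y \<in> hom C Y Z"
    using assms comp_in_hom inl_in_hom inr_in_hom by blast+
  from ex1_coproduct_arr[OF this] obtain u where unique:
    "\<And>v. v \<in> hom C (cp X Y) Z \<and> v \<cdot> inl X Y = h \<cdot> inl X Y \<and> v \<cdot> inr X Y = h \<cdot> inr X Y \<Longrightarrow> v = u"
    by (metis (no_types, lifting))
  have "h = u" "k = u"
    using assms(3-6) by (simp_all add: unique)
  then show ?thesis by simp
qed

end

locale ideal_monad_category = category_with_coproducts C cp inl inr
  for C :: "('o, 'a) cat" and cp inl inr +
  fixes To Ta \<eta> \<mu> T0o T0a m0
  assumes ideal_monad: "ideal_monad C cp inl inr To Ta \<eta> \<mu> T0o T0a m0"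
begin

abbreviation inl\<^sub>T :: "'o \<Rightarrow> 'a" where "inl\<^sub>T X \<equiv> inl X (T0o X)"
abbreviation inr\<^sub>T :: "'o \<Rightarrow> 'a" where "inr\<^sub>T X \<equiv> inr X (T0o X)"

lemma monad: "monad C To Ta \<eta> \<mu>"
  using ideal_monad unfolding ideal_monad_def by blast

lemma T0_functor: "functor C C T0o T0a"
  using ideal_monad unfolding ideal_monad_def by blast

lemma To_eq: "X \<in> Obj C \<Longrightarrow> To X = cp X (T0o X)"
  using ideal_monad unfolding ideal_monad_def by blast

lemma eta_eq: "X \<in> Obj C \<Longrightarrow> \<eta> X = inl\<^sub>T X"
  using ideal_monad unfolding ideal_monad_def by blast

lemma T0o_in_Obj: "X \<in> Obj C \<Longrightarrow> T0o X \<in> Obj C"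
  using T0_functor unfolding functor_def by blast

lemma To_in_Obj: "X \<in> Obj C \<Longrightarrow> To X \<in> Obj C"
  using monad unfolding monad_def functor_def by blast

lemma Ta_in_hom: "f \<in> hom C X Y \<Longrightarrow> Ta f \<in> hom C (To X) (To Y)"
  using monad unfolding monad_def functor_def hom_def by auto

lemma T0a_in_hom: "f \<in> hom C X Y \<Longrightarrow> T0a f \<in> hom C (T0o X) (T0o Y)"
  using T0_functor unfolding functor_def hom_def by auto

lemma mu_in_hom: "X \<in> Obj C \<Longrightarrow> \<mu> X \<in> hom C (To (To X)) (To X)"
  using monad unfolding monad_def nat_trans_def by blast

lemma m0_in_hom: "X \<in> Obj C \<Longrightarrow> m0 X \<in> hom C (T0o (To X)) (T0o X)"
  using ideal_monad unfolding ideal_monad_def nat_trans_def by blast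

lemma inlT_in_hom: "X \<in> Obj C \<Longrightarrow> inl\<^sub>T X \<in> hom C X (To X)"
  using inl_in_hom T0o_in_Obj To_eq by simp

lemma inrT_in_hom: "X \<in> Obj C \<Longrightarrow> inr\<^sub>T X \<in> hom C (T0o X) (To X)"
  using inr_in_hom T0o_in_Obj To_eq by simp

lemma mu_inl: "X \<in> Obj C \<Longrightarrow> \<mu> X \<cdot> inl\<^sub>T (To X) = Ide C (To X)"
  using monad eta_eq To_in_Obj unfolding monad_def by fastforce

lemma mu_inr: "X \<in> Obj C \<Longrightarrow> \<mu> X \<cdot> inr\<^sub>T (To X) = inr\<^sub>T X \<cdot> m0 X"
  using ideal_monad unfolding ideal_monad_def by blast

lemma
  assumes "f \<in> hom C X Z" "g \<in> hom C (T0o X) Z"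
  shows cotupleT_in_hom: "cotuple f g \<in> hom C (To X) Z"
    and cotupleT_inl: "cotuple f g \<cdot> inl\<^sub>T X = f"
    and cotupleT_inr: "cotuple f g \<cdot> inr\<^sub>T X = g"
  using assms hom_Obj To_eq cotuple_in_hom cotuple_inl cotuple_inr by auto

lemma
  assumes "f \<in> hom C X Y"
  shows Ta_inl: "Ta f \<cdot> inl\<^sub>T X = inl\<^sub>T Y \<cdot> f"
    and Ta_inr: "Ta f \<cdot> inr\<^sub>T X = inr\<^sub>T Y \<cdot> T0a f"
proof -
  have "X \<in> Obj C" "Y \<in> Obj C"
    using assms hom_Obj by blast+
  moreover have "Ta f = cotuple (inl\<^sub>T Y \<cdot> f) (inr\<^sub>T Y \<cdot> T0a f)"
    using ideal_monad assms unfolding ideal_monad_def hom_def by auto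
  moreover have "inl\<^sub>T Y \<cdot> f \<in> hom C X (To Y)" "inr\<^sub>T Y \<cdot> T0a f \<in> hom C (T0o X) (To Y)"
    using assms comp_in_hom inlT_in_hom inrT_in_hom T0a_in_hom \<open>Y \<in> Obj C\<close> by blast+
  ultimately show "Ta f \<cdot> inl\<^sub>T X = inl\<^sub>T Y \<cdot> f" "Ta f \<cdot> inr\<^sub>T X = inr\<^sub>T Y \<cdot> T0a f"
    by (simp_all add: cotupleT_inl cotupleT_inr)
qed

lemma T_arr_eqI:
  assumes "X \<in> Obj C" "h \<in> hom C (To X) Z" "k \<in> hom C (To X) Z"
    and "h \<cdot> inl\<^sub>T X = k \<cdot> inl\<^sub>T X" "h \<cdot> inr\<^sub>T X = k \<cdot> inr\<^sub>T X"
  shows "h = k"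
  by (rule coproduct_arr_eqI[of X "T0o X"]) (use assms T0o_in_Obj To_eq in simp_all)

lemma comp_Ta_inl:
  assumes f: "f \<in> hom C X Y" and g: "g \<in> hom C (To Y) Z"
  shows "(g \<cdot> Ta f) \<cdot> inl\<^sub>T X = (g \<cdot> inl\<^sub>T Y) \<cdot> f"
proof -
  have "X \<in> Obj C" "Y \<in> Obj C"
    using f hom_Obj by blast+
  then have "(g \<cdot> Ta f) \<cdot> inl\<^sub>T X = g \<cdot> (Ta f \<cdot> inl\<^sub>T X)"
    using comp_assoc[OF inlT_in_hom Ta_in_hom[OF f] g] by simp
  also have "\<dots> = g \<cdot> (inl\<^sub>T Y \<cdot> f)"
    using Ta_inl[OF f] by simp
  also have "\<dots> = (g \<cdot> inl\<^sub>T Y) \<cdot> f"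
    using comp_assoc[OF f inlT_in_hom g] \<open>Y \<in> Obj C\<close> by simp
  finally show ?thesis .
qed

lemma comp_Ta_inr:
  assumes f: "f \<in> hom C X Y" and g: "g \<in> hom C (To Y) Z"
  shows "(g \<cdot> Ta f) \<cdot> inr\<^sub>T X = (g \<cdot> inr\<^sub>T Y) \<cdot> T0a f"
proof -
  have "X \<in> Obj C" "Y \<in> Obj C"
    using f hom_Obj by blast+
  then have "(g \<cdot> Ta f) \<cdot> inr\<^sub>T X = g \<cdot> (Ta f \<cdot> inr\<^sub>T X)"
    using comp_assoc[OF inrT_in_hom Ta_in_hom[OF f] g] by simp
  also have "\<dots> = g \<cdot> (inr\<^sub>T Y \<cdot> T0a f)"
    using Ta_inr[OF f] by simp
  also have "\<dots> = (g \<cdot> inr\<^sub>T Y) \<cdot> T0a f"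
    using comp_assoc[OF T0a_in_hom[OF f] inrT_in_hom g] \<open>Y \<in> Obj C\<close> by simp
  finally show ?thesis .
qed

lemma comp_mu_inl:
  assumes X: "X \<in> Obj C" and g: "g \<in> hom C (To X) Z"
  shows "(g \<cdot> \<mu> X) \<cdot> inl\<^sub>T (To X) = g"
proof -
  have "(g \<cdot> \<mu> X) \<cdot> inl\<^sub>T (To X) = g \<cdot> (\<mu> X \<cdot> inl\<^sub>T (To X))"
    using comp_assoc[OF inlT_in_hom[OF To_in_Obj[OF X]] mu_in_hom[OF X] g] by simp
  then show ?thesis
    using mu_inl[OF X] comp_ide_right[OF g] by simp
qed

lemma comp_mu_inr:
  assumes X: "X \<in> Obj C" and g: "g \<in> hom C (To X) Z"
  shows "(g \<cdot> \<mu> X) \<cdot> inr\<^sub>T (To X) = (g \<cdot> inr\<^sub>T X) \<cdot> m0 X"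
proof -
  have "(g \<cdot> \<mu> X) \<cdot> inr\<^sub>T (To X) = g \<cdot> (\<mu> X \<cdot> inr\<^sub>T (To X))"
    using comp_assoc[OF inrT_in_hom[OF To_in_Obj[OF X]] mu_in_hom[OF X] g] by simp
  also have "\<dots> = g \<cdot> (inr\<^sub>T X \<cdot> m0 X)"
    using mu_inr[OF X] by simp
  also have "\<dots> = (g \<cdot> inr\<^sub>T X) \<cdot> m0 X"
    using comp_assoc[OF m0_in_hom[OF X] inrT_in_hom[OF X] g] by simp
  finally show ?thesis .
qed

lemma unital_algebra_assoc_iff:
  assumes a: "a \<in> hom C (To X) X" and unit: "a \<cdot> \<eta> X = Ide C X"
  shows "a \<cdot> \<mu> X = a \<cdot> Ta a \<longleftrightarrow> (a \<cdot> inr\<^sub>T X) \<cdot> m0 X = (a \<cdot> inr\<^sub>T X) \<cdot> T0a a"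
proof -
  have X: "X \<in> Obj C"
    using a hom_Obj by blast
  have on_inr: "(a \<cdot> Ta a) \<cdot> inr\<^sub>T (To X) = (a \<cdot> inr\<^sub>T X) \<cdot> T0a a"
    using comp_Ta_inr[OF a a] .
  have "(a \<cdot> Ta a) \<cdot> inl\<^sub>T (To X) = (a \<cdot> inl\<^sub>T X) \<cdot> a"
    using comp_Ta_inl[OF a a] .
  also have "\<dots> = a"
    using unit eta_eq[OF X] comp_ide_left[OF a] by simp
  finally have on_inl: "(a \<cdot> \<mu> X) \<cdot> inl\<^sub>T (To X) = (a \<cdot> Ta a) \<cdot> inl\<^sub>T (To X)"
    using comp_mu_inl[OF X a] by simp
  show ?thesis
  proof
    assume "a \<cdot> \<mu> X = a \<cdot> Ta a"
    then show "(a \<cdot> inr\<^sub>T X) \<cdot> m0 X = (a \<cdot> inr\<^sub>T X) \<cdot> T0a a"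
      using comp_mu_inr[OF X a] on_inr by simp
  next
    assume "(a \<cdot> inr\<^sub>T X) \<cdot> m0 X = (a \<cdot> inr\<^sub>T X) \<cdot> T0a a"
    then have "(a \<cdot> \<mu> X) \<cdot> inr\<^sub>T (To X) = (a \<cdot> Ta a) \<cdot> inr\<^sub>T (To X)"
      using comp_mu_inr[OF X a] on_inr by simp
    moreover have "a \<cdot> \<mu> X \<in> hom C (To (To X)) X" "a \<cdot> Ta a \<in> hom C (To (To X)) X"
      using comp_in_hom a mu_in_hom[OF X] Ta_in_hom[OF a] by blast+
    ultimately show "a \<cdot> \<mu> X = a \<cdot> Ta a"
      using T_arr_eqI[OF To_in_Obj[OF X]] on_inl by blast
  qed
qed

lemma unital_algebra_hom_iff:
  assumes a: "a \<in> hom C (To X) X" "a \<cdot> \<eta> X = Ide C X"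
    and b: "b \<in> hom C (To Y) Y" "b \<cdot> \<eta> Y = Ide C Y"
    and f: "f \<in> hom C X Y"
  shows "f \<cdot> a = b \<cdot> Ta f \<longleftrightarrow> f \<cdot> (a \<cdot> inr\<^sub>T X) = (b \<cdot> inr\<^sub>T Y) \<cdot> T0a f"
proof -
  have X: "X \<in> Obj C" and Y: "Y \<in> Obj C"
    using f hom_Obj by blast+
  have on_inr: "(b \<cdot> Ta f) \<cdot> inr\<^sub>T X = (b \<cdot> inr\<^sub>T Y) \<cdot> T0a f"
    using comp_Ta_inr[OF f b(1)] .
  have assoc_inr: "(f \<cdot> a) \<cdot> inr\<^sub>T X = f \<cdot> (a \<cdot> inr\<^sub>T X)"
    using comp_assoc[OF inrT_in_hom[OF X] a(1) f] by simp
  have "(f \<cdot> a) \<cdot> inl\<^sub>T X = f \<cdot> (a \<cdot> inl\<^sub>T X)"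
    using comp_assoc[OF inlT_in_hom[OF X] a(1) f] by simp
  also have "\<dots> = (b \<cdot> inl\<^sub>T Y) \<cdot> f"
    using a(2) b(2) eta_eq X Y comp_ide_left[OF f] comp_ide_right[OF f] by simp
  also have "\<dots> = (b \<cdot> Ta f) \<cdot> inl\<^sub>T X"
    using comp_Ta_inl[OF f b(1)] by simp
  finally have on_inl: "(f \<cdot> a) \<cdot> inl\<^sub>T X = (b \<cdot> Ta f) \<cdot> inl\<^sub>T X" .
  show ?thesis
  proof
    assume "f \<cdot> a = b \<cdot> Ta f"
    then show "f \<cdot> (a \<cdot> inr\<^sub>T X) = (b \<cdot> inr\<^sub>T Y) \<cdot> T0a f"
      using assoc_inr on_inr by simp
  next
    assume "f \<cdot> (a \<cdot> inr\<^sub>T X) = (b \<cdot> inr\<^sub>T Y) \<cdot> T0a f"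
    then have "(f \<cdot> a) \<cdot> inr\<^sub>T X = (b \<cdot> Ta f) \<cdot> inr\<^sub>T X"
      using assoc_inr on_inr by simp
    moreover have "f \<cdot> a \<in> hom C (To X) Y" "b \<cdot> Ta f \<in> hom C (To X) Y"
      using comp_in_hom a(1) f b(1) Ta_in_hom[OF f] by blast+
    ultimately show "f \<cdot> a = b \<cdot> Ta f"
      using T_arr_eqI[OF X] on_inl by blast
  qed
qed

abbreviation "EM \<equiv> em_cat C To Ta \<eta> \<mu>"
abbreviation "Alg \<equiv> alg_sub C cp inl inr T0o T0a m0"

lemma em_algebra_eq_cotuple:
  assumes "(X, a) \<in> Obj EM"
  shows "cotuple (Ide C X) (a \<cdot> inr\<^sub>T X) = a"
proof -
  have X: "X \<in> Obj C" and a: "a \<in> hom C (To X) X" and unit: "a \<cdot> inl\<^sub>T X = Ide C X"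
    using assms eta_eq by (auto simp: mem_Obj_em_cat_iff)
  have b: "a \<cdot> inr\<^sub>T X \<in> hom C (T0o X) X"
    using comp_in_hom[OF inrT_in_hom[OF X] a] .
  show ?thesis
    by (rule T_arr_eqI[OF X cotupleT_in_hom[OF ide_in_hom[OF X] b] a])
      (use unit cotupleT_inl[OF ide_in_hom[OF X] b] cotupleT_inr[OF ide_in_hom[OF X] b] in simp_all)
qed

lemma em_algebra_restrict_in_alg_sub:
  assumes "(X, a) \<in> Obj EM"
  shows "(X, a \<cdot> inr\<^sub>T X) \<in> Obj Alg"
proof -
  have X: "X \<in> Obj C" and a: "a \<in> hom C (To X) X" and "a \<cdot> \<eta> X = Ide C X"
    and "a \<cdot> \<mu> X = a \<cdot> Ta a"
    using assms by (auto simp: mem_Obj_em_cat_iff)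
  then have "(a \<cdot> inr\<^sub>T X) \<cdot> m0 X = (a \<cdot> inr\<^sub>T X) \<cdot> T0a a"
    using unital_algebra_assoc_iff by blast
  then show ?thesis
    using X comp_in_hom[OF inrT_in_hom[OF X] a] em_algebra_eq_cotuple[OF assms]
    by (simp add: mem_Obj_alg_sub_iff)
qed

lemma cotuple_in_em_cat:
  assumes "(X, b) \<in> Obj Alg"
  shows "(X, cotuple (Ide C X) b) \<in> Obj EM"
proof -
  have X: "X \<in> Obj C" and b: "b \<in> hom C (T0o X) X"
    and assoc: "b \<cdot> m0 X = b \<cdot> T0a (cotuple (Ide C X) b)"
    using assms by (auto simp: mem_Obj_alg_sub_iff)
  define a where "a = cotuple (Ide C X) b"
  have a: "a \<in> hom C (To X) X" and unit: "a \<cdot> \<eta> X = Ide C X" and "a \<cdot> inr\<^sub>T X = b"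
    unfolding a_def using cotupleT_in_hom cotupleT_inl cotupleT_inr ide_in_hom[OF X] b eta_eq[OF X]
    by simp_all
  with assoc have "a \<cdot> \<mu> X = a \<cdot> Ta a"
    using unital_algebra_assoc_iff[OF a unit] a_def by simp
  then show ?thesis
    using X a unit by (simp add: mem_Obj_em_cat_iff a_def)
qed

end

theorem lemma17:
  fixes C :: "('o, 'a) cat"
  assumes "category C"
    and "has_finite_coproducts C cp inl inr"
    and "ideal_monad C cp inl inr To Ta \<eta> \<mu> T0o T0a m0"
  shows "iso_cat (em_cat C To Ta \<eta> \<mu>) (alg_sub C cp inl inr T0o T0a m0)"
proof -
  interpret ideal_monad_category C cp inl inr To Ta \<eta> \<mu> T0o T0a m0
    using assms by unfold_locales
  show ?thesis
  proof (subst em_cat_eq_structured_cat, subst alg_sub_eq_structured_cat,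
         rule iso_cat_structured_cat[where \<phi> = "\<lambda>X a. a \<cdot> inr\<^sub>T X"
                                        and \<psi> = "\<lambda>X b. cotuple (Ide C X) b"])
    fix X a assume "(X, a) \<in> Obj EM"
    then show "(X, a \<cdot> inr\<^sub>T X) \<in> Obj Alg \<and> cotuple (Ide C X) (a \<cdot> inr\<^sub>T X) = a"
      using em_algebra_restrict_in_alg_sub em_algebra_eq_cotuple by blast
  next
    fix X b assume "(X, b) \<in> Obj Alg"
    moreover from this have "X \<in> Obj C" "b \<in> hom C (T0o X) X"
      by (simp_all add: mem_Obj_alg_sub_iff)
    ultimately show "(X, cotuple (Ide C X) b) \<in> Obj EM \<and> cotuple (Ide C X) b \<cdot> inr\<^sub>T X = b"
      using cotuple_in_em_cat cotupleT_inr[OF ide_in_hom] by blast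
  next
    fix X a Y b f assume "(X, a) \<in> Obj EM" "(Y, b) \<in> Obj EM" "f \<in> hom C X Y"
    then show "f \<cdot> a = b \<cdot> Ta f \<longleftrightarrow> f \<cdot> (a \<cdot> inr\<^sub>T X) = (b \<cdot> inr\<^sub>T Y) \<cdot> T0a f"
      using unital_algebra_hom_iff by (simp add: mem_Obj_em_cat_iff)
  qed
qed

end
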